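(* Let $a>1$ be an integer, and define the sequence $(u_i)_{i\geq 0}$ by $u_0=0$, $u_1=1$, and $u_{i+1}=au_i+u_{i-1}$ for $i=1,2,3,\ldots$. Then no integer $x$ can be written as $x=u_m+au_n$ with $m\in\{0,1,2,\ldots\}$ and $n\in\{1,2,3,\ldots\}$ in two or more different ways (i.e., for two distinct pairs $(m,n)$), except in the case $a=2$ and $x=4=u_0+au_2=u_2+au_1$. *)

theory Defs
  imports Main
begin

fun u :: "int \<Rightarrow> nat \<Rightarrow> int" where
  "u a 0 = 0"
| "u a (Suc 0) = 1"
| "u a (Suc (Suc i)) = a * u a (Suc i) + u a i"

end

theory Submission
  imports Defs
begin

(* The sequence is strictly increasing and grows fast: (a + 1) u_n < u_(n+2).
   Suppose u_m + a u_n = u_m' + a u_n' with n' < n, so that m < m'. If m > n, then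
   u_m' >= u_(m+1) = a u_m + u_(m-1) is already too large. If m <= n, the growth bound
   gives m' <= n + 1, and expanding u_(n+1) and u_n by the recurrence excludes every case
   but m < n, m' <= n, where u_m + a (a - 2) u_(n-1) + (a - 1) u_(n-2) <= 0 forces
   a = 2, m = 0 and n = 2. *)

lemma u_nonneg: "a \<ge> 0 \<Longrightarrow> u a k \<ge> 0"
  by (induction a k rule: u.induct) auto

lemma u_pos: "a > 0 \<Longrightarrow> k > 0 \<Longrightarrow> u a k > 0"
  by (induction a k rule: u.induct) (auto simp: u_nonneg add_pos_nonneg)

lemma u_less_u_Suc:
  assumes "a > 1" shows "u a k < u a (Suc k)"
proof (cases k)
  case (Suc j)
  have "u a (Suc j) < a * u a (Suc j)" using assms u_pos[of a "Suc j"] by simp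
  then show ?thesis using Suc u_nonneg[of a j] assms by simp
qed simp

lemma strict_mono_u: "a > 1 \<Longrightarrow> strict_mono (u a)"
  by (simp add: strict_mono_Suc_iff u_less_u_Suc)

lemma u_Suc_Suc_gt:
  assumes "a > 1" shows "(a + 1) * u a n < u a (Suc (Suc n))"
proof -
  have "a * u a n < a * u a (Suc n)" using assms u_less_u_Suc[OF assms] by simp
  then show ?thesis by (simp add: algebra_simps)
qed

lemma index_le_Suc_if_u_less:
  assumes "a > 1" and "u a k < (a + 1) * u a n" shows "k \<le> Suc n"
proof -
  have "u a k < u a (Suc (Suc n))" using assms(2) u_Suc_Suc_gt[OF assms(1), of n] by linarith
  then have "k < Suc (Suc n)" by (rule strict_mono_less[OF strict_mono_u[OF assms(1)], THEN iffD1])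
  then show ?thesis by simp
qed

context
  fixes a :: int and m n m' n' :: nat
  assumes a_gt_1: "a > 1"
    and n'_pos: "n' \<ge> 1"
    and n'_less_n: "n' < n"
    and two_reprs: "u a m + a * u a n = u a m' + a * u a n'"
begin

private lemmas u_less_iff = strict_mono_less[OF strict_mono_u[OF a_gt_1]]
private lemmas u_le_iff = strict_mono_less_eq[OF strict_mono_u[OF a_gt_1]]

private lemma n_eq_Suc_Suc: obtains j where "n = Suc (Suc j)"
proof
  show "n = Suc (Suc (n - 2))" using n'_pos n'_less_n by simp
qed

private lemma m_less_m': "m < m'"
proof -
  have "a * u a n' < a * u a n" using a_gt_1 n'_less_n u_less_iff by simp
  then have "u a m < u a m'" using two_reprs by linarith
  then show ?thesis using u_less_iff by simp
qed

private lemma a_u_n'_pos: "a * u a n' > 0"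
  using a_gt_1 u_pos[of a n'] n'_pos by simp

private lemma two_reprs_m_gt_n:
  assumes "n < m" shows False
proof -
  obtain p where m: "m = Suc p" and "n \<le> p" using assms by (cases m) auto
  have "u a (Suc m) \<le> u a m'" using m_less_m' u_le_iff by simp
  moreover have "u a n \<le> u a p" using \<open>n \<le> p\<close> u_le_iff by simp
  ultimately have "a * u a m + u a n \<le> u a m'" using m by simp
  then have "(a - 1) * u a m < (a - 1) * u a n"
    using two_reprs a_u_n'_pos by (simp add: algebra_simps)
  then have "u a m < u a n" using a_gt_1 by simp
  then show False using assms u_less_iff by simp
qed

private lemma two_reprs_m_eq_n:
  assumes "m = n" shows False
proof -
  obtain j where n: "n = Suc (Suc j)" using n_eq_Suc_Suc .
  have "u a m' < (a + 1) * u a n" using assms two_reprs a_u_n'_pos by (simp add: algebra_simps)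
  then have "m' = Suc n" using index_le_Suc_if_u_less[OF a_gt_1] m_less_m' assms by fastforce
  then have "a * u a n' = (a - 1) * u a (Suc j) + u a j"
    using assms two_reprs n by (simp add: algebra_simps)
  moreover have "u a j < u a (Suc j)" using u_less_iff by simp
  moreover have "(a - 1) * u a j < (a - 1) * u a (Suc j)" using calculation(2) a_gt_1 by simp
  ultimately have "a * u a j < a * u a n'" and "a * u a n' < a * u a (Suc j)"
    by (simp_all add: algebra_simps)
  then have "j < n'" and "n' < Suc j" using a_gt_1 u_less_iff by simp_all
  then show False by simp
qed

private lemma two_reprs_m_lt_n:
  assumes "m < n" shows "a = 2 \<and> m = 0 \<and> n = 2"
proof -
  obtain j where n: "n = Suc (Suc j)" using n_eq_Suc_Suc .
  have "u a m < u a n" using assms u_less_iff by simp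
  then have "u a m' < (a + 1) * u a n"
    using two_reprs a_u_n'_pos by (simp add: algebra_simps)
  then have "m' \<le> Suc n" using index_le_Suc_if_u_less[OF a_gt_1] by blast
  moreover have "m' \<noteq> Suc n"
  proof
    assume "m' = Suc n"
    then have "u a m = u a (Suc j) + a * u a n'" using two_reprs n by simp
    then have "Suc j < m" using a_u_n'_pos u_less_iff by (metis less_add_same_cancel1)
    then show False using assms n by simp
  qed
  ultimately have "u a m' \<le> u a n" using u_le_iff by simp
  moreover have "a * u a n' \<le> a * u a (Suc j)" using n n'_less_n u_le_iff a_gt_1 by simp
  ultimately have "u a m + a * u a n \<le> u a n + a * u a (Suc j)" using two_reprs by linarith
  then have "u a m + a * (a - 2) * u a (Suc j) + (a - 1) * u a j \<le> 0"
    using n by (simp add: algebra_simps)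
  moreover have "u a m \<ge> 0" and "a * (a - 2) * u a (Suc j) \<ge> 0" and "(a - 1) * u a j \<ge> 0"
    using a_gt_1 u_nonneg[of a] by simp_all
  ultimately have "u a m = 0" and "a * (a - 2) * u a (Suc j) = 0" and "(a - 1) * u a j = 0"
    by linarith+
  moreover have "u a (Suc j) > 0" using a_gt_1 u_pos by simp
  ultimately have "u a m = 0" and "a = 2" and "u a j = 0" using a_gt_1 by simp_all
  moreover have "m = 0" and "j = 0" if "u a m = 0" and "u a j = 0"
    using that u_pos[of a m] u_pos[of a j] a_gt_1 by (auto simp del: u.simps)
  ultimately show ?thesis using n by simp
qed

lemma two_reprs_exceptional: "a = 2 \<and> m = 0 \<and> n = 2"
  using two_reprs_m_gt_n two_reprs_m_eq_n two_reprs_m_lt_n by (cases m n rule: linorder_cases) auto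

end

theorem theorem1p2:
  fixes a x :: int and m n m' n' :: nat
  assumes "a > 1"
    and "n \<ge> 1" and "n' \<ge> 1"
    and "(m, n) \<noteq> (m', n')"
    and "x = u a m + a * u a n"
    and "x = u a m' + a * u a n'"
  shows "a = 2 \<and> x = 4"
proof -
  have reprs: "u a m + a * u a n = u a m' + a * u a n'" using assms(5,6) by simp
  consider "n = n'" | "n' < n" | "n < n'" by linarith
  then show ?thesis
  proof cases
    case 1
    then have "m = m'" using reprs strict_mono_eq[OF strict_mono_u[OF assms(1)]] by simp
    then show ?thesis using 1 assms(4) by simp
  next
    case 2
    then show ?thesis
      using two_reprs_exceptional[OF assms(1,3) 2 reprs] assms(5) by (simp add: eval_nat_numeral)
  next
    case 3
    then show ?thesis
      using two_reprs_exceptional[OF assms(1,2) 3 reprs[symmetric]] assms(6) by (simp add: eval_nat_numeral)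
  qed
qed

end
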